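(* Let $K\ge 2$ and $M\ge 1$ be integers. For $m\in[M]$ let $\boldsymbol{A}_m\in\mathbb{R}^{K\times K}$ be a confusion matrix (entrywise nonnegative, each column summing to one), let $\boldsymbol{\lambda}\in\mathbb{R}^K$ be a probability vector, $\boldsymbol{D}=\mathrm{Diag}(\boldsymbol{\lambda})$, and set $$\boldsymbol{H}=[\boldsymbol{A}_1^{\top},\ldots,\boldsymbol{A}_M^{\top}]^{\top}\boldsymbol{D}^{1/2}\in\mathbb{R}^{MK\times K},\qquad \boldsymbol{X}=\boldsymbol{H}\boldsymbol{H}^{\top},$$ i.e. $\boldsymbol{X}$ is the $MK\times MK$ block matrix whose $(m,j)$-th $K\times K$ block is $\boldsymbol{R}_{m,j}=\boldsymbol{A}_m\boldsymbol{D}\boldsymbol{A}_j^{\top}$ for all $m,j\in[M]$. Assume that $\boldsymbol{H}$ satisfies the sufficiently scattered condition (SSC), that $\mathrm{rank}(\boldsymbol{H})=K$, and that $\boldsymbol{X}$ is available. Then all the confusion matrices and the prior are identified uniquely by symmetric nonnegative matrix factorization of $\boldsymbol{X}$ up to a common column permutation: for any $\boldsymbol{H}^\star\in\mathbb{R}^{MK\times K}$ with $\boldsymbol{H}^\star\ge\boldsymbol{0}$ and $\boldsymbol{X}=\boldsymbol{H}^\star(\boldsymbol{H}^\star)^{\top}$, there is a permutation matrix $\boldsymbol{\Pi}$ such that $\boldsymbol{A}_m^\star=\boldsymbol{A}_m\boldsymbol{\Pi}$ for all $m\in[M]$ and $\boldsymbol{\lambda}^\star=\boldsymbol{\Pi}^{\top}\boldsymbol{\lambda}$,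 where $\boldsymbol{A}^\star_m$ denotes the $m$-th $K\times K$ row block of $\boldsymbol{H}^\star$ with each column normalized to unit $\ell_1$ norm, and $\boldsymbol{\lambda}^\star$ is the prior estimate obtained from $\boldsymbol{H}^\star$, i.e. $\boldsymbol{H}^\star=[(\boldsymbol{A}_1^\star)^{\top},\ldots,(\boldsymbol{A}_M^\star)^{\top}]^{\top}\mathrm{Diag}(\boldsymbol{\lambda}^\star)^{1/2}$.
   Context: Sufficiently scattered condition (SSC): a nonnegative matrix $\boldsymbol{Z}\in\mathbb{R}^{I\times K}_+$ satisfies the SSC if (i) $\mathcal{C}\subseteq \mathrm{cone}(\boldsymbol{Z}^{\top})$, where $\mathcal{C}=\{\boldsymbol{x}\in\mathbb{R}^K:\ \boldsymbol{x}^{\top}\mathbf{1}\ge\sqrt{K-1}\,\|\boldsymbol{x}\|_2\}$ and $\mathrm{cone}(\boldsymbol{Z}^{\top})=\{\boldsymbol{Z}^{\top}\boldsymbol{\theta}:\boldsymbol{\theta}\ge \boldsymbol{0}\}$ is the conic hull of the rows of $\boldsymbol{Z}$; and (ii) $\mathrm{cone}(\boldsymbol{Z}^{\top})\not\subseteq\mathrm{cone}(\boldsymbol{Q})$ for any orthonormal $\boldsymbol{Q}\in\mathbb{R}^{K\times K}$ other than permutation matrices. In the Dawid–Skene model, $\boldsymbol{A}_m(k',k)=\Pr(X_m=k'\mid Y=k)$ is the probability that annotator $m$ outputs label $k'$ when the true label is $k$, and $\boldsymbol{\lambda}(k)=\Pr(Y=k)$. *)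

theory Defs
  imports "HOL-Analysis.Analysis"
begin

definition ssc_C :: "(real^'k) set" where
  "ssc_C = {x. (\<Sum>i\<in>UNIV. x $ i) \<ge> sqrt (real CARD('k) - 1) * norm x}"

definition col_cone :: "real^'n^'k \<Rightarrow> (real^'k) set" where
  "col_cone B = {B *v \<theta> | \<theta>. \<forall>i. \<theta> $ i \<ge> 0}"

definition perm_matrix :: "real^'k^'k \<Rightarrow> bool" where
  "perm_matrix P \<longleftrightarrow> (\<exists>p. p permutes (UNIV :: 'k set) \<and>
      P = (\<chi> i j. if i = p j then 1 else 0))"

definition SSC :: "real^'k^'i \<Rightarrow> bool" where
  "SSC Z \<longleftrightarrow> ssc_C \<subseteq> col_cone (transpose Z) \<and>
     (\<forall>Q :: real^'k^'k. orthogonal_matrix Q \<and> col_cone (transpose Z) \<subseteq> col_cone Q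
        \<longrightarrow> perm_matrix Q)"

definition confusion_matrix :: "real^'k^'k \<Rightarrow> bool" where
  "confusion_matrix A \<longleftrightarrow> (\<forall>i j. A $ i $ j \<ge> 0) \<and> (\<forall>j. (\<Sum>i\<in>UNIV. A $ i $ j) = 1)"

definition prob_vector :: "real^'k \<Rightarrow> bool" where
  "prob_vector l \<longleftrightarrow> (\<forall>i. l $ i \<ge> 0) \<and> (\<Sum>i\<in>UNIV. l $ i) = 1"

definition stackH :: "('m::finite \<Rightarrow> real^'k^'k) \<Rightarrow> real^'k \<Rightarrow> real^'k^('m \<times> 'k)" where
  "stackH A l = (\<chi> r j. A (fst r) $ (snd r) $ j * sqrt (l $ j))"

definition block_normalized :: "real^'k^('m::finite \<times> 'k) \<Rightarrow> 'm \<Rightarrow> real^'k^'k" where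
  "block_normalized Hs m = (\<chi> i j. Hs $ (m, i) $ j / (\<Sum>i'\<in>UNIV. \<bar>Hs $ (m, i') $ j\<bar>))"

end

theory Submission
  imports Defs
begin

text \<open>Since rank H = K, the Gram matrix H^T H is invertible, and any factor H* with
  H* H*^T = H H^T is of the form H Q with Q orthogonal. Nonnegativity of H* = H Q means
  that Q^T maps every row of H into the nonnegative orthant, i.e. cone(H^T) \<subseteq> cone(Q), so the
  SSC forces Q to be a permutation matrix (only its second part is needed). Permuting the
  columns of the stacked factor gives again a stacked factor, built from the confusion
  matrices A_m \<Pi> and the prior \<Pi>^T \<lambda>; as the columns of a confusion matrix sum to one,
  column normalization recovers A_m \<Pi> and the column scales recover \<Pi>^T \<lambda>.\<close>

lemma matrix_mul_transpose_self_eq_0: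
  fixes M :: "real^'n^'m"
  assumes "M ** transpose M = 0"
  shows "M = 0"
proof -
  have "(\<Sum>k\<in>UNIV. (M $ i $ k)\<^sup>2) = 0" for i
    using arg_cong[OF assms, of "\<lambda>X. X $ i $ i"]
    by (simp add: matrix_matrix_mult_def transpose_def power2_eq_square)
  then have "M $ i $ k = 0" for i k
    by (simp add: sum_nonneg_eq_0_iff)
  then show ?thesis
    by (simp add: vec_eq_iff)
qed

lemma matrix_eq_if_mul_transpose_eq:
  fixes A B :: "real^'n^'m"
  assumes "A ** transpose A = X" "A ** transpose B = X" "B ** transpose B = X"
  shows "A = B"
proof -
  have "B ** transpose A = transpose (A ** transpose B)"
    by (simp add: matrix_transpose_mul)
  also have "\<dots> = transpose (A ** transpose A)"
    by (simp only: assms(1,2))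
  also have "\<dots> = X"
    unfolding matrix_transpose_mul transpose_transpose by (rule assms(1))
  finally have BA: "B ** transpose A = X" .
  have "(A - B) ** transpose (A - B)
      = A ** transpose A - A ** transpose B - B ** transpose A + B ** transpose B"
    by (simp add: matrix_matrix_mult_def transpose_def vec_eq_iff algebra_simps
        sum_subtractf sum.distrib)
  also have "\<dots> = 0"
    using assms BA by simp
  finally show ?thesis
    using matrix_mul_transpose_self_eq_0 by fastforce
qed

lemma gram_matrix_invertible:
  fixes H :: "real^'n^'m"
  assumes "inj ((*v) H)"
  shows "invertible (transpose H ** H)"
proof -
  have "x = 0" if "(transpose H ** H) *v x = 0" for x
  proof -
    have "(H *v x) \<bullet> (H *v x) = x \<bullet> ((transpose H ** H) *v x)"
      by (metis dot_lmul_matrix inner_commute matrix_vector_mul_assoc transpose_matrix_vector)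
    then have "H *v x = H *v 0"
      using that by simp
    then show ?thesis
      by (rule injD[OF assms])
  qed
  then have "inj ((*v) (transpose H ** H))"
    by (metis (no_types, lifting) injI eq_iff_diff_eq_0 matrix_vector_mult_diff_distrib)
  then show ?thesis
    using matrix_left_invertible_injective invertible_left_inverse by blast
qed

lemma gram_factor_orthogonal:
  fixes H Hs :: "real^'k^'r"
  assumes inj: "inj ((*v) H)" and X: "H ** transpose H = Hs ** transpose Hs"
  shows "\<exists>Q. orthogonal_matrix Q \<and> Hs = H ** Q"
proof -
  define G where "G = transpose H ** H"
  obtain B where BG: "B ** G = mat 1"
    using gram_matrix_invertible[OF inj] unfolding G_def invertible_def by blast
  have G_sym: "transpose G = G"
    unfolding G_def by (simp add: matrix_transpose_mul)
  define Q where "Q = B ** transpose H ** Hs"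
  have "Q ** transpose Q = B ** transpose H ** (Hs ** transpose Hs) ** H ** transpose B"
    unfolding Q_def by (simp add: matrix_transpose_mul matrix_mul_assoc)
  also have "\<dots> = B ** G ** (G ** transpose B)"
    unfolding G_def by (simp add: matrix_mul_assoc flip: X)
  also have "\<dots> = G ** transpose B"
    using BG by simp
  also have "\<dots> = transpose (B ** G)"
    using G_sym by (simp add: matrix_transpose_mul)
  finally have "orthogonal_matrix Q"
    using BG by (simp add: orthogonal_matrix matrix_left_right_inverse)
  moreover have "H ** Q = Hs"
  proof (rule matrix_eq_if_mul_transpose_eq)
    show "(H ** Q) ** transpose (H ** Q) = H ** transpose H"
      using \<open>orthogonal_matrix Q\<close>
      by (simp add: orthogonal_matrix_def matrix_transpose_mul matrix_mul_assoc
          flip: matrix_mul_assoc[of H Q])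
    have "(H ** Q) ** transpose Hs = H ** B ** transpose H ** (Hs ** transpose Hs)"
      unfolding Q_def by (simp add: matrix_mul_assoc)
    also have "\<dots> = H ** (B ** G) ** transpose H"
      unfolding G_def by (simp add: matrix_mul_assoc flip: X)
    finally show "(H ** Q) ** transpose Hs = H ** transpose H"
      using BG by simp
  qed (use X in simp)
  ultimately show ?thesis
    by auto
qed

lemma col_cone_transpose_subset_if_nonneg_mul:
  fixes H :: "real^'k^'r" and Q :: "real^'k^'k"
  assumes Q: "orthogonal_matrix Q" and nonneg: "\<forall>r j. (H ** Q) $ r $ j \<ge> 0"
  shows "col_cone (transpose H) \<subseteq> col_cone Q"
proof
  fix x assume "x \<in> col_cone (transpose H)"
  then obtain \<theta> where x: "x = transpose H *v \<theta>" and \<theta>: "\<forall>i. \<theta> $ i \<ge> 0"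
    unfolding col_cone_def by blast
  have "x = Q *v (transpose (H ** Q) *v \<theta>)"
    using Q unfolding x orthogonal_matrix_def
    by (simp add: matrix_vector_mul_assoc matrix_transpose_mul matrix_mul_assoc)
  moreover have "(transpose (H ** Q) *v \<theta>) $ j \<ge> 0" for j
    using \<theta> nonneg
    by (auto simp: matrix_vector_mult_def transpose_def intro!: sum_nonneg)
  ultimately show "x \<in> col_cone Q"
    unfolding col_cone_def by blast
qed

definition perm_mat :: "('k \<Rightarrow> 'k) \<Rightarrow> real^'k^'k::finite" where
  "perm_mat p = (\<chi> i j. if i = p j then 1 else 0)"

lemma perm_matrix_iff_perm_mat: "perm_matrix P \<longleftrightarrow> (\<exists>p. p permutes UNIV \<and> P = perm_mat p)"
  unfolding perm_matrix_def perm_mat_def ..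

lemma SSC_nonneg_gram_factor_perm:
  fixes H Hs :: "real^'k^'r"
  assumes "SSC H" and "inj ((*v) H)"
    and "\<forall>r j. Hs $ r $ j \<ge> 0" and "H ** transpose H = Hs ** transpose Hs"
  shows "\<exists>p. p permutes UNIV \<and> Hs = H ** perm_mat p"
proof -
  obtain Q where "orthogonal_matrix Q" and Hs: "Hs = H ** Q"
    using gram_factor_orthogonal assms(2,4) by blast
  then have "perm_matrix Q"
    using assms(1,3) col_cone_transpose_subset_if_nonneg_mul unfolding SSC_def by blast
  then show ?thesis
    unfolding perm_matrix_iff_perm_mat Hs by blast
qed

lemma matrix_mul_perm_mat_nth: "(M ** perm_mat p) $ i $ j = M $ i $ p j"
  by (simp add: perm_mat_def matrix_matrix_mult_def if_distrib cong: if_cong)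

lemma transpose_perm_mat_mult_vec_nth: "(transpose (perm_mat p) *v v) $ j = v $ p j"
  unfolding perm_mat_def matrix_vector_mult_def transpose_def
  by (simp add: if_distrib[of "\<lambda>x. x * _"] cong: if_cong)

lemma confusion_matrix_mul_perm_mat:
  "confusion_matrix A \<Longrightarrow> confusion_matrix (A ** perm_mat p)"
  by (simp add: confusion_matrix_def matrix_mul_perm_mat_nth)

lemma stackH_mul_perm_mat:
  "stackH A l ** perm_mat p = stackH (\<lambda>m. A m ** perm_mat p) (transpose (perm_mat p) *v l)"
  by (simp add: vec_eq_iff matrix_mul_perm_mat_nth transpose_perm_mat_mult_vec_nth stackH_def
      del: transpose_matrix_vector)

lemma prior_nonzero_if_inj_stackH:
  assumes "inj ((*v) (stackH A l))"
  shows "l $ j \<noteq> 0"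
proof
  assume "l $ j = 0"
  then have "stackH A l *v axis j 1 = stackH A l *v 0"
    by (simp add: vec_eq_iff matrix_vector_mult_def axis_def stackH_def if_distrib cong: if_cong)
  then have "axis j (1::real) = 0"
    by (rule injD[OF assms])
  then show False
    by (simp add: axis_eq_0_iff)
qed

lemma sum_abs_stackH_block_column:
  assumes "confusion_matrix (A m)" and "l $ j \<ge> 0"
  shows "(\<Sum>i\<in>UNIV. \<bar>stackH A l $ (m, i) $ j\<bar>) = sqrt (l $ j)"
  using assms
  by (simp add: confusion_matrix_def stackH_def abs_mult flip: sum_distrib_right)

lemma block_normalized_stackH:
  assumes "confusion_matrix (A m)" and "\<forall>j. l $ j > 0"
  shows "block_normalized (stackH A l) m = A m"
proof -
  have "sqrt (l $ j) \<noteq> 0" for j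
    using assms(2) by (metis less_irrefl real_sqrt_eq_zero_cancel_iff)
  then show ?thesis
    using assms sum_abs_stackH_block_column[of A m l]
    by (simp add: vec_eq_iff block_normalized_def stackH_def less_imp_le)
qed

lemma stackH_prior_unique:
  assumes "confusion_matrix (A m)" and "\<forall>j. l $ j \<ge> 0" and "\<forall>j. l' $ j \<ge> 0"
    and "stackH A l = stackH A l'"
  shows "l = l'"
proof -
  have "sqrt (l $ j) = sqrt (l' $ j)" for j
    using sum_abs_stackH_block_column[of A m] assms by metis
  then show ?thesis
    using assms(2,3) by (simp add: vec_eq_iff)
qed

theorem proposition1:
  fixes A :: "'m::finite \<Rightarrow> real^'k::finite^'k"
    and lam :: "real^'k"
  assumes K2: "CARD('k) \<ge> 2"
    and conf: "\<forall>m. confusion_matrix (A m)"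
    and prob: "prob_vector lam"
    and ssc: "SSC (stackH A lam)"
    and rk: "rank (stackH A lam) = CARD('k)"
  shows "\<forall>Hs :: real^'k^('m \<times> 'k).
           (\<forall>r j. Hs $ r $ j \<ge> 0) \<and>
           stackH A lam ** transpose (stackH A lam) = Hs ** transpose Hs
           \<longrightarrow> (\<exists>P. perm_matrix P \<and>
                  (\<forall>m. block_normalized Hs m = A m ** P) \<and>
                  (\<exists>ls. (\<forall>j. ls $ j \<ge> 0) \<and> Hs = stackH (block_normalized Hs) ls) \<and>
                  (\<forall>ls. (\<forall>j. ls $ j \<ge> 0) \<and> Hs = stackH (block_normalized Hs) ls
                        \<longrightarrow> ls = transpose P *v lam))"
proof (intro allI impI)
  fix Hs :: "real^'k^('m \<times> 'k)"
  assume "(\<forall>r j. Hs $ r $ j \<ge> 0) \<and> stackH A lam ** transpose (stackH A lam) = Hs ** transpose Hs"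
  moreover have inj: "inj ((*v) (stackH A lam))"
    using rk full_rank_injective by blast
  ultimately obtain p where "p permutes UNIV" and Hs_perm: "Hs = stackH A lam ** perm_mat p"
    using SSC_nonneg_gram_factor_perm[OF ssc] by blast
  define P :: "real^'k^'k" where "P = perm_mat p"
  define lam' where "lam' = transpose P *v lam"
  have Hs: "Hs = stackH (\<lambda>m. A m ** P) lam'"
    by (simp add: Hs_perm P_def lam'_def stackH_mul_perm_mat)
  have "\<forall>j. lam $ j > 0"
    using prob prior_nonzero_if_inj_stackH[OF inj] by (simp add: prob_vector_def less_le)
  then have lam'_pos: "\<forall>j. lam' $ j > 0"
    by (simp add: lam'_def P_def transpose_perm_mat_mult_vec_nth del: transpose_matrix_vector)
  have conf': "confusion_matrix (A m ** P)" for m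
    using conf by (simp add: P_def confusion_matrix_mul_perm_mat)
  have normalized: "block_normalized Hs = (\<lambda>m. A m ** P)"
    using block_normalized_stackH[of "\<lambda>m. A m ** P" _ lam'] conf' lam'_pos
    by (simp add: Hs fun_eq_iff)
  show "\<exists>P. perm_matrix P \<and>
                  (\<forall>m. block_normalized Hs m = A m ** P) \<and>
                  (\<exists>ls. (\<forall>j. ls $ j \<ge> 0) \<and> Hs = stackH (block_normalized Hs) ls) \<and>
                  (\<forall>ls. (\<forall>j. ls $ j \<ge> 0) \<and> Hs = stackH (block_normalized Hs) ls
                        \<longrightarrow> ls = transpose P *v lam)"
  proof (intro exI[of _ P] conjI allI impI)
    show "perm_matrix P"
      using \<open>p permutes UNIV\<close> P_def perm_matrix_iff_perm_mat by blast
    show "block_normalized Hs m = A m ** P" for m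
      by (simp add: normalized)
    show "\<exists>ls. (\<forall>j. ls $ j \<ge> 0) \<and> Hs = stackH (block_normalized Hs) ls"
      unfolding normalized using Hs lam'_pos less_imp_le by blast
    show "ls = transpose P *v lam" if "(\<forall>j. ls $ j \<ge> 0) \<and> Hs = stackH (block_normalized Hs) ls" for ls
      using that Hs lam'_pos stackH_prior_unique[of "\<lambda>m. A m ** P", OF conf']
      unfolding normalized lam'_def by (metis less_imp_le)
  qed
qed

end
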